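(* Let $X$ be a finite set, $\mathbb{F}$ a field, $n\ge 2$, and let $F:X^n\to\mathbb{F}$ be a diagonal tensor, i.e. \[ F(x_1,\dots,x_n)=\sum_{a\in A}c_a\,\delta_a(x_1)\cdots\delta_a(x_n) \] for some $A\subset X$ and constants $c_a\ne 0$ for all $a\in A$, where $\delta_a(x)=1$ if $x=a$ and $0$ otherwise. Then the partition rank of $F$ equals $|A|$.
   Context: Let $X_1,\dots,X_n$ be finite sets and $\mathbb{F}$ a field. For $S=\{s_1<\dots<s_m\}\subset\{1,\dots,n\}$ write $\vec x_S=(x_{s_1},\dots,x_{s_m})$. A partition of $\{1,\dots,n\}$ is a collection of nonempty pairwise disjoint subsets whose union is $\{1,\dots,n\}$; it is trivial if it consists of the single set $\{1,\dots,n\}$. A function $h:X_1\times\cdots\times X_n\to\mathbb{F}$ has partition rank $1$ if there is a non-trivial partition $P$ of $\{1,\dots,n\}$ and functions $f_B$ ($B\in P$) with $h(x_1,\dots,x_n)=\prod_{B\in P}f_B(\vec x_B)$. The partition rank of $F:X_1\times\cdots\times X_n\to\mathbb{F}$ is the minimal $r$ such that $F$ is a sum of $r$ functions of partition rank $1$ (the zero function has partition rank $0$). *)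

theory Defs
  imports "HOL-Library.FuncSet"
begin

(* Points of X_1 x ... x X_n are encoded as extensional functions
  x \<in> {0..<n} ->E X (index set {0..<n} instead of {1..n}).
  A function on the product is a function (nat \<Rightarrow> 'a) \<Rightarrow> 'f, of which
  only the values on this set matter. *)

definition is_partition :: "nat set \<Rightarrow> nat set set \<Rightarrow> bool" where
  "is_partition I P \<longleftrightarrow> (\<forall>B\<in>P. B \<noteq> {}) \<and>
     (\<forall>B\<in>P. \<forall>C\<in>P. B \<noteq> C \<longrightarrow> B \<inter> C = {}) \<and> \<Union>P = I"

definition nontrivial_partition :: "nat set \<Rightarrow> nat set set \<Rightarrow> bool" where
  "nontrivial_partition I P \<longleftrightarrow> is_partition I P \<and> P \<noteq> {I}"

definition prank_one ::
  "nat \<Rightarrow> (nat \<Rightarrow> 'a set) \<Rightarrow> ((nat \<Rightarrow> 'a) \<Rightarrow> 'f::field) \<Rightarrow> bool" where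
  "prank_one n Xs h \<longleftrightarrow> (\<exists>P f. nontrivial_partition {0..<n} P \<and>
      (\<forall>x\<in>PiE {0..<n} Xs. h x = (\<Prod>B\<in>P. f B (restrict x B))))"

definition has_prank_le ::
  "nat \<Rightarrow> (nat \<Rightarrow> 'a set) \<Rightarrow> ((nat \<Rightarrow> 'a) \<Rightarrow> 'f::field) \<Rightarrow> nat \<Rightarrow> bool" where
  "has_prank_le n Xs F r \<longleftrightarrow> (\<exists>h :: nat \<Rightarrow> (nat \<Rightarrow> 'a) \<Rightarrow> 'f.
      (\<forall>i<r. prank_one n Xs (h i)) \<and>
      (\<forall>x\<in>PiE {0..<n} Xs. F x = (\<Sum>i<r. h i x)))"

definition partition_rank ::
  "nat \<Rightarrow> (nat \<Rightarrow> 'a set) \<Rightarrow> ((nat \<Rightarrow> 'a) \<Rightarrow> 'f::field) \<Rightarrow> nat" where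
  "partition_rank n Xs F = (LEAST r. has_prank_le n Xs F r)"

definition delta :: "'a \<Rightarrow> 'a \<Rightarrow> 'f::field" where
  "delta a x = (if x = a then 1 else 0)"

end

(*
  Upper bound: c_a \<delta>_a(x_1)...\<delta>_a(x_n) splits as (c_a \<delta>_a(x_1)) * (\<delta>_a(x_2)...\<delta>_a(x_n)).

  Lower bound, by induction on n: let F = h_1 + ... + h_r with every h_i of partition rank 1.
  Call h_i split if the last coordinate is a block of its own, so h_i(y, t) = g_i(t) R_i(y).
  Gaussian elimination gives v on A orthogonal to all g_i of split terms and vanishing at no more
  points of A than there are split terms. Contracting the last coordinate against v kills the split
  terms, keeps the others of partition rank 1 (the block of n just loses n), and turns F into the
  diagonal tensor with coefficients c_a v_a in one variable less. For n = 1 no function has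
  partition rank 1, so then A is empty.
*)
theory Submission
  imports Defs
begin

lemma ex_annihilator_few_zeros:
  fixes g :: "'j \<Rightarrow> 'a \<Rightarrow> 'f::field"
  assumes "finite J" and "finite A"
  shows "\<exists>v. (\<forall>j\<in>J. (\<Sum>a\<in>A. v a * g j a) = 0) \<and> card {a\<in>A. v a = 0} \<le> card J"
  using assms
proof (induction J arbitrary: A g rule: finite_induct)
  case empty
  show ?case by (rule exI[of _ "\<lambda>_. 1"]) simp
next
  case (insert j J)
  show ?case
  proof (cases "\<forall>a\<in>A. g j a = 0")
    case True
    obtain v where "\<forall>j\<in>J. (\<Sum>a\<in>A. v a * g j a) = 0" "card {a\<in>A. v a = 0} \<le> card J"
      using insert.IH insert.prems by blast
    with True insert.hyps show ?thesis by (intro exI[of _ v]) auto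
  next
    case False
    then obtain a0 where a0: "a0 \<in> A" "g j a0 \<noteq> 0" by blast
    \<comment> \<open>Gaussian elimination of the variable at a0 using the equation for j.\<close>
    define g' where "g' i a = g i a - g i a0 / g j a0 * g j a" for i a
    obtain v' where v': "\<forall>i\<in>J. (\<Sum>a\<in>A - {a0}. v' a * g' i a) = 0"
      "card {a\<in>A - {a0}. v' a = 0} \<le> card J"
      using insert.IH[of "A - {a0}" g'] insert.prems by auto
    define s where "s = (\<Sum>a\<in>A - {a0}. v' a * g j a)"
    define v where "v = v'(a0 := - s / g j a0)"
    have sum_v: "(\<Sum>a\<in>A. v a * g i a) = v a0 * g i a0 + (\<Sum>a\<in>A - {a0}. v' a * g i a)" for i
      using a0 insert.prems by (simp add: sum.remove v_def)
    have "(\<Sum>a\<in>A. v a * g i a) = 0" if "i \<in> J" for i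
    proof -
      have "(\<Sum>a\<in>A - {a0}. v' a * g i a) = g i a0 / g j a0 * s"
        using v'(1) that unfolding g'_def s_def
        by (simp add: sum_subtractf sum_distrib_left algebra_simps)
      then show ?thesis unfolding sum_v using a0 by (simp add: v_def field_simps)
    qed
    moreover have "(\<Sum>a\<in>A. v a * g j a) = 0"
      unfolding sum_v using a0 by (simp add: v_def s_def)
    moreover have "card {a\<in>A. v a = 0} \<le> card (insert j J)"
    proof -
      have "{a\<in>A. v a = 0} \<subseteq> insert a0 {a\<in>A - {a0}. v' a = 0}"
        by (auto simp: v_def)
      then have "card {a\<in>A. v a = 0} \<le> card (insert a0 {a\<in>A - {a0}. v' a = 0})"
        using insert.prems by (intro card_mono) auto
      also have "\<dots> \<le> Suc (card {a\<in>A - {a0}. v' a = 0})"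
        using insert.prems by (simp add: card_insert_if)
      finally show ?thesis using v'(2) insert.hyps by simp
    qed
    ultimately show ?thesis by blast
  qed
qed

lemma is_partition_finite: "is_partition I P \<Longrightarrow> finite I \<Longrightarrow> finite P"
  unfolding is_partition_def using finite_UnionD by auto

lemma not_nontrivial_partition_singleton: "\<not> nontrivial_partition {i} P"
proof
  assume "nontrivial_partition {i} P"
  then have ne: "\<forall>B\<in>P. B \<noteq> {}" and un: "\<Union>P = {i}" and nt: "P \<noteq> {{i}}"
    unfolding nontrivial_partition_def is_partition_def by auto
  have "B = {i}" if "B \<in> P" for B
    using ne un that Union_upper[OF that] by (auto simp: subset_singleton_iff)
  moreover have "P \<noteq> {}" using un by auto
  ultimately show False using nt by blast
qed

lemma nontrivial_partition_remove:
  assumes P: "nontrivial_partition I P" and B: "B \<in> P" "i \<in> B" "B \<noteq> {i}"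
  shows "nontrivial_partition (I - {i}) (insert (B - {i}) (P - {B}))"
proof -
  have ne: "\<forall>D\<in>P. D \<noteq> {}" and disj: "\<forall>D\<in>P. \<forall>E\<in>P. D \<noteq> E \<longrightarrow> D \<inter> E = {}"
    and un: "\<Union>P = I" and nt: "P \<noteq> {I}"
    using P unfolding nontrivial_partition_def is_partition_def by simp_all
  have disj_B: "(B - {i}) \<inter> D = {}" if "D \<in> P - {B}" for D
    using disj B(1) that by fast
  have other: "i \<notin> D" if "D \<in> P - {B}" for D
    using disj B that by fast
  have "P \<noteq> {B}" using nt un by auto
  then obtain C where C: "C \<in> P" "C \<noteq> B" using B(1) by fast
  have B': "B - {i} \<noteq> {}" using B by fast
  have B'_new: "B - {i} \<notin> P - {B}" using disj_B B' by fast
  let ?P' = "insert (B - {i}) (P - {B})"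
  have "\<forall>D\<in>?P'. D \<noteq> {}" using ne B' by simp
  moreover have "\<forall>D\<in>?P'. \<forall>E\<in>?P'. D \<noteq> E \<longrightarrow> D \<inter> E = {}"
    using disj disj_B by (simp add: Int_commute)
  moreover have "\<Union>?P' = I - {i}"
    using un other B by auto
  moreover have "?P' \<noteq> {I - {i}}"
  proof
    assume "?P' = {I - {i}}"
    then have "C = B - {i}" using C by (metis Diff_iff insertCI singletonD)
    then show False using C B'_new by simp
  qed
  ultimately show ?thesis unfolding nontrivial_partition_def is_partition_def by blast
qed

lemma PiE_fun_upd_atLeast0LessThan:
  "y \<in> PiE {0..<n} Xs \<Longrightarrow> t \<in> Xs n \<Longrightarrow> y(n := t) \<in> PiE {0..<Suc n} Xs"
  using PiE_fun_upd[of t Xs n y "{0..<n}"] by (simp add: atLeast0_lessThan_Suc)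

lemma prod_blocks_fun_upd:
  assumes "is_partition I P" "finite P" "B \<in> P" "i \<in> B"
  shows "(\<Prod>D\<in>P. f D (restrict (x(i := t)) D))
       = f B (restrict (x(i := t)) B) * (\<Prod>D\<in>P - {B}. f D (restrict x D))"
proof -
  have "restrict (x(i := t)) D = restrict x D" if "D \<in> P - {B}" for D
  proof -
    have "i \<notin> D" using assms(1,3,4) that unfolding is_partition_def by fast
    then show ?thesis by (intro restrict_ext) auto
  qed
  then show ?thesis using assms(2,3) by (simp add: prod.remove)
qed

lemma prank_one_last_coordinate_cases:
  fixes h :: "(nat \<Rightarrow> 'a) \<Rightarrow> 'f::field"
  assumes h: "prank_one (Suc n) Xs h" and T: "T \<subseteq> Xs n"
  shows "(\<exists>g R. \<forall>y\<in>PiE {0..<n} Xs. \<forall>t\<in>Xs n. h (y(n := t)) = g t * R y)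
    \<or> (\<forall>v. prank_one n Xs (\<lambda>y. \<Sum>t\<in>T. v t * h (y(n := t))))"
proof -
  obtain P f where P: "nontrivial_partition {0..<Suc n} P"
    and hP: "\<forall>x\<in>PiE {0..<Suc n} Xs. h x = (\<Prod>B\<in>P. f B (restrict x B))"
    using h unfolding prank_one_def by (elim exE conjE)
  have part: "is_partition {0..<Suc n} P" and fin: "finite P"
    using P is_partition_finite unfolding nontrivial_partition_def by auto
  have "n \<in> \<Union>P" using part unfolding is_partition_def by simp
  then obtain B where B: "B \<in> P" "n \<in> B" by blast
  define R where "R y = (\<Prod>D\<in>P - {B}. f D (restrict y D))" for y
  have h_upd: "h (y(n := t)) = f B (restrict (y(n := t)) B) * R y"
    if "y \<in> PiE {0..<n} Xs" "t \<in> Xs n" for y t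
    using hP PiE_fun_upd_atLeast0LessThan[OF that] prod_blocks_fun_upd[OF part fin B]
    by (simp add: R_def)
  show ?thesis
  proof (cases "B = {n}")
    case True
    have "restrict (y(n := t)) B = restrict (\<lambda>_. t) {n}" for y :: "nat \<Rightarrow> 'a" and t
      using True by (simp add: restrict_def fun_eq_iff)
    then have "\<forall>y\<in>PiE {0..<n} Xs. \<forall>t\<in>Xs n. h (y(n := t)) = f B (restrict (\<lambda>_. t) {n}) * R y"
      using h_upd by simp
    then show ?thesis by (intro disjI1 exI)
  next
    case False
    \<comment> \<open>Contracting the last coordinate only changes the factor of the block B containing n.\<close>
    have "prank_one n Xs (\<lambda>y. \<Sum>t\<in>T. v t * h (y(n := t)))" for v
    proof -
      define f' where "f' = f(B - {n} := \<lambda>z. \<Sum>t\<in>T. v t * f B (z(n := t)))"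
      have P': "nontrivial_partition {0..<n} (insert (B - {n}) (P - {B}))"
        using nontrivial_partition_remove[OF P B False] by (simp add: atLeast0_lessThan_Suc)
      have B'_new: "B - {n} \<notin> P - {B}"
      proof
        assume "B - {n} \<in> P - {B}"
        then have "(B - {n}) \<inter> B = {}" using part B(1) unfolding is_partition_def by fast
        then show False using B(2) False by fast
      qed
      have "(\<Sum>t\<in>T. v t * h (y(n := t))) = (\<Prod>D\<in>insert (B - {n}) (P - {B}). f' D (restrict y D))"
        if y: "y \<in> PiE {0..<n} Xs" for y
      proof -
        have "restrict (y(n := t)) B = (restrict y (B - {n}))(n := t)" for t
          using B(2) by (auto simp: restrict_def fun_eq_iff)
        then have "(\<Sum>t\<in>T. v t * h (y(n := t))) = f' (B - {n}) (restrict y (B - {n})) * R y"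
          using h_upd[OF y] T by (simp add: f'_def sum_distrib_right mult.assoc subset_iff)
        also have "R y = (\<Prod>D\<in>P - {B}. f' D (restrict y D))"
          unfolding R_def f'_def using B'_new by (intro prod.cong) auto
        also have "f' (B - {n}) (restrict y (B - {n})) * \<dots>
            = (\<Prod>D\<in>insert (B - {n}) (P - {B}). f' D (restrict y D))"
          using fin B'_new by simp
        finally show ?thesis .
      qed
      then show ?thesis using P' unfolding prank_one_def by blast
    qed
    then show ?thesis by blast
  qed
qed

definition diagonal_tensor :: "nat \<Rightarrow> 'a set \<Rightarrow> ('a \<Rightarrow> 'f::field) \<Rightarrow> (nat \<Rightarrow> 'a) \<Rightarrow> 'f" where
  "diagonal_tensor n A c x = (\<Sum>a\<in>A. c a * (\<Prod>i<n. delta a (x i)))"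

lemma sum_mult_delta:
  "finite A \<Longrightarrow> (\<Sum>x\<in>A. w x * delta a x) = (if a \<in> A then w a else 0)"
  unfolding delta_def by (simp add: if_distrib[of "(*) _"] cong: if_cong)

lemma diagonal_tensor_1:
  "finite A \<Longrightarrow> diagonal_tensor 1 A c x = (if x 0 \<in> A then c (x 0) else 0)"
  unfolding diagonal_tensor_def delta_def by (simp add: if_distrib[of "(*) _"] cong: if_cong)

lemma diagonal_tensor_contract_last:
  assumes "finite A"
  shows "(\<Sum>t\<in>A. v t * diagonal_tensor (Suc n) A c (y(n := t)))
       = diagonal_tensor n A (\<lambda>a. c a * v a) y"
proof -
  have "(\<Sum>t\<in>A. v t * diagonal_tensor (Suc n) A c (y(n := t)))
      = (\<Sum>t\<in>A. \<Sum>a\<in>A. c a * (\<Prod>i<n. delta a (y i)) * (v t * delta a t))"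
    unfolding diagonal_tensor_def
    by (simp add: prod.lessThan_Suc sum_distrib_left ac_simps)
  also have "\<dots> = (\<Sum>a\<in>A. c a * (\<Prod>i<n. delta a (y i)) * (\<Sum>t\<in>A. v t * delta a t))"
    by (subst sum.swap) (simp add: sum_distrib_left)
  also have "\<dots> = diagonal_tensor n A (\<lambda>a. c a * v a) y"
    unfolding diagonal_tensor_def using assms
    by (intro sum.cong) (simp_all add: sum_mult_delta)
  finally show ?thesis .
qed

lemma diagonal_tensor_nonzero_coeffs:
  "finite A \<Longrightarrow> diagonal_tensor n A c = diagonal_tensor n {a\<in>A. c a \<noteq> 0} c"
  unfolding diagonal_tensor_def by (intro ext sum.mono_neutral_right) auto

lemma not_prank_one_1: "\<not> prank_one 1 Xs h"
  using not_nontrivial_partition_singleton[of 0] by (simp add: prank_one_def)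

lemma prank_one_scaled_prod:
  assumes "2 \<le> n"
  shows "prank_one n Xs (\<lambda>x. c * (\<Prod>i<n. u i (x i)))"
proof -
  define P where "P = {{0}, {1..<n}}"
  define f where "f B z = (if B = {0} then c * u 0 (z 0) else \<Prod>i\<in>B. u i (z i))" for B z
  have one: "1 \<in> {1..<n}" "1 \<in> {0..<n}" using assms by simp_all
  have blocks: "{0} \<noteq> {1..<n}" "{1..<n} \<noteq> {}" "{0} \<noteq> {0..<n}"
    using one by (metis singletonD zero_neq_one, blast, metis singletonD zero_neq_one)
  have "nontrivial_partition {0..<n} P"
    unfolding nontrivial_partition_def is_partition_def P_def using blocks by auto
  moreover have "c * (\<Prod>i<n. u i (x i)) = (\<Prod>B\<in>P. f B (restrict x B))" for x :: "nat \<Rightarrow> 'a"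
  proof -
    have "{..<n} = insert 0 {1..<n}" using assms by auto
    then show ?thesis using blocks by (simp add: P_def f_def)
  qed
  ultimately show ?thesis unfolding prank_one_def by (intro exI[of _ P] exI[of _ f]) simp
qed

lemma has_prank_le_sum:
  assumes "finite I" and "\<forall>i\<in>I. prank_one n Xs (h i)"
    and "\<forall>x\<in>PiE {0..<n} Xs. F x = (\<Sum>i\<in>I. h i x)"
  shows "has_prank_le n Xs F (card I)"
proof -
  obtain e where e: "bij_betw e {..<card I} I"
    using ex_bij_betw_nat_finite[OF assms(1)] by (auto simp: atLeast0LessThan)
  have "\<forall>x\<in>PiE {0..<n} Xs. F x = (\<Sum>k<card I. h (e k) x)"
    using assms(3) sum.reindex_bij_betw[OF e, of "\<lambda>i. h i _"] by simp
  moreover have "\<forall>k<card I. prank_one n Xs (h (e k))"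
    using assms(2) bij_betw_apply[OF e] by simp
  ultimately show ?thesis unfolding has_prank_le_def by (intro exI[of _ "\<lambda>k. h (e k)"]) simp
qed

lemma diagonal_tensor_1_eq_0_imp_empty:
  assumes "finite A" and "A \<subseteq> X" and "\<forall>a\<in>A. c a \<noteq> 0"
    and "\<forall>x\<in>PiE {0..<1} (\<lambda>_. X). diagonal_tensor 1 A c x = 0"
  shows "A = {}"
proof (rule ccontr)
  assume "A \<noteq> {}"
  then obtain a where a: "a \<in> A" by blast
  have "{0..<1} = {0::nat}" by auto
  then have x: "restrict (\<lambda>_. a) {0::nat} \<in> PiE {0..<1} (\<lambda>_. X)"
    using a assms(2) by (auto simp: restrict_PiE_iff)
  have "c a = diagonal_tensor 1 A c (restrict (\<lambda>_. a) {0})"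
    using diagonal_tensor_1[OF assms(1), of c "restrict (\<lambda>_. a) {0}"] a by simp
  also have "\<dots> = 0" using assms(4) x by simp
  finally show False using a assms(3) by simp
qed

lemma diagonal_tensor_eq_sum_contract_last:
  assumes "finite A" and "A \<subseteq> X"
    and "\<forall>x\<in>PiE {0..<Suc n} (\<lambda>_. X). diagonal_tensor (Suc n) A c x = (\<Sum>i\<in>I. h i x)"
    and "y \<in> PiE {0..<n} (\<lambda>_. X)"
  shows "diagonal_tensor n A (\<lambda>a. c a * v a) y = (\<Sum>i\<in>I. \<Sum>t\<in>A. v t * h i (y(n := t)))"
proof -
  have "diagonal_tensor n A (\<lambda>a. c a * v a) y
      = (\<Sum>t\<in>A. v t * diagonal_tensor (Suc n) A c (y(n := t)))"
    by (simp add: diagonal_tensor_contract_last[OF assms(1)])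
  also have "\<dots> = (\<Sum>t\<in>A. v t * (\<Sum>i\<in>I. h i (y(n := t))))"
    using assms(2,3) PiE_fun_upd_atLeast0LessThan[OF assms(4)] by (intro sum.cong) auto
  also have "\<dots> = (\<Sum>i\<in>I. \<Sum>t\<in>A. v t * h i (y(n := t)))"
    unfolding sum_distrib_left by (rule sum.swap)
  finally show ?thesis .
qed

lemma diagonal_tensor_decomposition_contract_last:
  fixes h :: "'j \<Rightarrow> (nat \<Rightarrow> 'a) \<Rightarrow> 'f::field"
  assumes finI: "finite I" and finA: "finite A" and AX: "A \<subseteq> X"
    and rank_one: "\<forall>i\<in>I. prank_one (Suc n) (\<lambda>_. X) (h i)"
    and decomp: "\<forall>x\<in>PiE {0..<Suc n} (\<lambda>_. X). diagonal_tensor (Suc n) A c x = (\<Sum>i\<in>I. h i x)"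
  obtains J v where "J \<subseteq> I" and "card {a\<in>A. v a = 0} \<le> card J"
    and "\<forall>i\<in>I - J. prank_one n (\<lambda>_. X) (\<lambda>y. \<Sum>t\<in>A. v t * h i (y(n := t)))"
    and "\<forall>y\<in>PiE {0..<n} (\<lambda>_. X). diagonal_tensor n A (\<lambda>a. c a * v a) y
           = (\<Sum>i\<in>I - J. \<Sum>t\<in>A. v t * h i (y(n := t)))"
proof -
  define J where "J = {i\<in>I. \<exists>g R. \<forall>y\<in>PiE {0..<n} (\<lambda>_. X). \<forall>t\<in>X. h i (y(n := t)) = g t * R y}"
  have "\<forall>i\<in>J. \<exists>g R. \<forall>y\<in>PiE {0..<n} (\<lambda>_. X). \<forall>t\<in>X. h i (y(n := t)) = g t * R y"
    by (simp add: J_def)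
  then obtain g R where gR: "\<forall>i\<in>J. \<forall>y\<in>PiE {0..<n} (\<lambda>_. X). \<forall>t\<in>X. h i (y(n := t)) = g i t * R i y"
    by metis
  have finJ: "finite J" and JI: "J \<subseteq> I" using finI by (auto simp: J_def)
  obtain v where v: "\<forall>j\<in>J. (\<Sum>a\<in>A. v a * g j a) = 0" "card {a\<in>A. v a = 0} \<le> card J"
    using ex_annihilator_few_zeros[OF finJ finA] by blast
  have "\<forall>i\<in>I - J. prank_one n (\<lambda>_. X) (\<lambda>y. \<Sum>t\<in>A. v t * h i (y(n := t)))"
    using prank_one_last_coordinate_cases[OF _ AX] rank_one unfolding J_def by blast
  moreover have "diagonal_tensor n A (\<lambda>a. c a * v a) y = (\<Sum>i\<in>I - J. \<Sum>t\<in>A. v t * h i (y(n := t)))"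
    if y: "y \<in> PiE {0..<n} (\<lambda>_. X)" for y
  proof -
    have "(\<Sum>t\<in>A. v t * h i (y(n := t))) = 0" if i: "i \<in> J" for i
    proof -
      have "(\<Sum>t\<in>A. v t * h i (y(n := t))) = (\<Sum>t\<in>A. v t * g i t) * R i y"
        unfolding sum_distrib_right using gR i y AX by (intro sum.cong) auto
      then show ?thesis using v(1) i by simp
    qed
    then have "(\<Sum>i\<in>I. \<Sum>t\<in>A. v t * h i (y(n := t))) = (\<Sum>i\<in>I - J. \<Sum>t\<in>A. v t * h i (y(n := t)))"
      using finI by (intro sum.mono_neutral_right) auto
    then show ?thesis
      using diagonal_tensor_eq_sum_contract_last[OF finA AX decomp y] by simp
  qed
  ultimately show ?thesis using that JI v(2) by blast
qed

lemma card_le_of_diagonal_tensor_eq_sum_prank_one: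
  fixes h :: "'j \<Rightarrow> (nat \<Rightarrow> 'a) \<Rightarrow> 'f::field"
  assumes "1 \<le> n" and "finite I" and "finite A" and "A \<subseteq> X" and "\<forall>a\<in>A. c a \<noteq> 0"
    and "\<forall>i\<in>I. prank_one n (\<lambda>_. X) (h i)"
    and "\<forall>x\<in>PiE {0..<n} (\<lambda>_. X). diagonal_tensor n A c x = (\<Sum>i\<in>I. h i x)"
  shows "card A \<le> card I"
  using assms
proof (induction n arbitrary: I h A c rule: nat_induct_at_least)
  case base
  then have "I = {}" using not_prank_one_1 by blast
  with base show ?case using diagonal_tensor_1_eq_0_imp_empty[of A X c] by simp
next
  case (Suc n)
  note finI = Suc.prems(1) and finA = Suc.prems(2)
  obtain J v where JI: "J \<subseteq> I" and zeros: "card {a\<in>A. v a = 0} \<le> card J"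
    and contracted: "\<forall>i\<in>I - J. prank_one n (\<lambda>_. X) (\<lambda>y. \<Sum>t\<in>A. v t * h i (y(n := t)))"
    "\<forall>y\<in>PiE {0..<n} (\<lambda>_. X). diagonal_tensor n A (\<lambda>a. c a * v a) y
       = (\<Sum>i\<in>I - J. \<Sum>t\<in>A. v t * h i (y(n := t)))"
    using diagonal_tensor_decomposition_contract_last[OF Suc.prems(1-3,5,6)] by blast
  have "{a\<in>A. c a * v a \<noteq> 0} = {a\<in>A. v a \<noteq> 0}" using Suc.prems(4) by auto
  then have "diagonal_tensor n A (\<lambda>a. c a * v a) = diagonal_tensor n {a\<in>A. v a \<noteq> 0} (\<lambda>a. c a * v a)"
    using diagonal_tensor_nonzero_coeffs[OF finA, of n "\<lambda>a. c a * v a"] by simp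
  then have nonzeros: "card {a\<in>A. v a \<noteq> 0} \<le> card (I - J)"
    using Suc.IH[where I = "I - J" and A = "{a\<in>A. v a \<noteq> 0}" and c = "\<lambda>a. c a * v a"
        and h = "\<lambda>i y. \<Sum>t\<in>A. v t * h i (y(n := t))"]
      contracted finI finA Suc.prems(3,4) by auto
  have "card A = card {a\<in>A. v a \<noteq> 0} + card {a\<in>A. v a = 0}"
    using card_Int_Diff[OF finA, of "{a. v a \<noteq> 0}"] by (simp add: Int_def set_diff_eq)
  also have "\<dots> \<le> card (I - J) + card J" using nonzeros zeros by simp
  also have "\<dots> = card I"
    using card_Int_Diff[OF finI, of J] JI by (simp add: Int_absorb1)
  finally show ?case .
qed

theorem lemma8:
  fixes X :: "'a set" and A :: "'a set" and c :: "'a \<Rightarrow> 'f::field"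
    and n :: nat and F :: "(nat \<Rightarrow> 'a) \<Rightarrow> 'f"
  assumes "finite X" and "n \<ge> 2" and "A \<subseteq> X"
    and "\<forall>a\<in>A. c a \<noteq> 0"
    and "\<forall>x\<in>PiE {0..<n} (\<lambda>_. X).
           F x = (\<Sum>a\<in>A. c a * (\<Prod>i<n. delta a (x i)))"
  shows "partition_rank n (\<lambda>_. X) F = card A"
  unfolding partition_rank_def
proof (rule Least_equality)
  have finA: "finite A" using assms(1,3) by (rule finite_subset[rotated])
  have "prank_one n (\<lambda>_. X) (\<lambda>x. c a * (\<Prod>i<n. delta a (x i)))" for a
    by (rule prank_one_scaled_prod[OF assms(2)])
  then show "has_prank_le n (\<lambda>_. X) F (card A)"
    using has_prank_le_sum[OF finA _ assms(5)] by blast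
  fix r assume "has_prank_le n (\<lambda>_. X) F r"
  then obtain h :: "nat \<Rightarrow> (nat \<Rightarrow> 'a) \<Rightarrow> 'f" where
    "\<forall>i<r. prank_one n (\<lambda>_. X) (h i)" and "\<forall>x\<in>PiE {0..<n} (\<lambda>_. X). F x = (\<Sum>i<r. h i x)"
    unfolding has_prank_le_def by blast
  then have "card A \<le> card {..<r}"
    using card_le_of_diagonal_tensor_eq_sum_prank_one[of n "{..<r}" A X c h] assms(2-5) finA
    by (simp add: diagonal_tensor_def)
  then show "card A \<le> r" by simp
qed

end
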